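(* Let $A = \langle Q,\Sigma,F,\delta\rangle$ be a tree automaton and $R$ a left-linear term rewriting system over $\Sigma$. Suppose that for every rule $\ell \to r \in R$, every assignment $\alpha : \mathcal{X} \to Q$ and every $q \in Q$: if $\ell\alpha \rightsquigarrow_A^* q$, then there exists a term $t$ with $\ell \to_R^+ t$ and $t\alpha \rightsquigarrow_A^* q$. Then $L(A)$ is weakly closed under rewriting with respect to $R$, i.e. for every $s \in L(A)$ that is not a normal form of $\to_R$ there exists $s' \in L(A)$ with $s \to_R^+ s'$.
   Context: A tree automaton $A=\langle Q,\Sigma,F,\delta\rangle$ consists of a finite set of states $Q$, a finite signature $\Sigma$, final states $F\subseteq Q$, and transition rules $f(q_1,\ldots,q_n)\rightsquigarrow q$ ($f\in\Sigma$ of arity $n$, $q_i,q\in Q$). The relation $\rightsquigarrow_A$ is the rewrite relation on terms over $\Sigma\cup Q$ (states as constants) generated by these rules in arbitrary contexts, and $\rightsquigarrow_A^*$ its reflexive-transitive closure. $L(A)$ is the set of ground terms $t$ over $\Sigma$ with $t\rightsquigarrow_A^* q$ for some $q\in F$. $\mathcal{X}$ is the set of variables; for $\alpha:\mathcal{X}\to Q$ and a term $u$, $u\alpha$ is the term over $\Sigma\cup Q$ obtained by replacing each variable $x$ by $\alpha(x)$. A term rewriting system $R$ is a set of rules $\ell\to r$ ($\ell$ not a variable, variables of $r$ among those of $\ell$); $\to_R$ is the induced one-step rewrite relation, $\to_R^+$ its transitive closure; it is left-linear if no variable occurs more than once in any left-hand side. A normal form is a term with no $\to_R$-step. *)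

theory Defs
  imports Main
begin

datatype ('f, 'v) "term" = Var 'v | Fun 'f "('f, 'v) term list"

fun vars_term :: "('f, 'v) term \<Rightarrow> 'v set" where
  "vars_term (Var x) = {x}"
| "vars_term (Fun f ts) = \<Union> (set (map vars_term ts))"

fun subst_apply :: "('f, 'v) term \<Rightarrow> ('v \<Rightarrow> ('f, 'w) term) \<Rightarrow> ('f, 'w) term" where
  "subst_apply (Var x) \<sigma> = \<sigma> x"
| "subst_apply (Fun f ts) \<sigma> = Fun f (map (\<lambda>t. subst_apply t \<sigma>) ts)"

fun wf_term :: "('f \<times> nat) set \<Rightarrow> ('f, 'v) term \<Rightarrow> bool" where
  "wf_term \<Sigma> (Var x) = True"
| "wf_term \<Sigma> (Fun f ts) = ((f, length ts) \<in> \<Sigma> \<and> (\<forall>t \<in> set ts. wf_term \<Sigma> t))"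

definition ground :: "('f, 'v) term \<Rightarrow> bool" where
  "ground t \<longleftrightarrow> vars_term t = {}"

inductive_set rstep :: "(('f, 'v) term \<times> ('f, 'v) term) set \<Rightarrow> (('f, 'v) term \<times> ('f, 'v) term) set"
  for R where
  root: "(l, r) \<in> R \<Longrightarrow> (subst_apply l \<sigma>, subst_apply r \<sigma>) \<in> rstep R"
| ctxt: "(s, t) \<in> rstep R \<Longrightarrow> (Fun f (ss @ s # ts), Fun f (ss @ t # ts)) \<in> rstep R"

definition is_trs :: "(('f, 'v) term \<times> ('f, 'v) term) set \<Rightarrow> bool" where
  "is_trs R \<longleftrightarrow> (\<forall>(l, r) \<in> R. (\<forall>x. l \<noteq> Var x) \<and> vars_term r \<subseteq> vars_term l)"

definition trs_over :: "('f \<times> nat) set \<Rightarrow> (('f, 'v) term \<times> ('f, 'v) term) set \<Rightarrow> bool" where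
  "trs_over \<Sigma> R \<longleftrightarrow> (\<forall>(l, r) \<in> R. wf_term \<Sigma> l \<and> wf_term \<Sigma> r)"

fun linear_term :: "('f, 'v) term \<Rightarrow> bool" where
  "linear_term (Var x) = True"
| "linear_term (Fun f ts) = ((\<forall>i < length ts. \<forall>j < length ts. i \<noteq> j \<longrightarrow> vars_term (ts ! i) \<inter> vars_term (ts ! j) = {}) \<and> (\<forall>t \<in> set ts. linear_term t))"

definition left_linear :: "(('f, 'v) term \<times> ('f, 'v) term) set \<Rightarrow> bool" where
  "left_linear R \<longleftrightarrow> (\<forall>(l, r) \<in> R. linear_term l)"

definition NF :: "('a \<times> 'a) set \<Rightarrow> 'a set" where
  "NF S = {s. \<nexists>t. (s, t) \<in> S}"

record ('q, 'f) ta =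
  states :: "'q set"
  sig :: "('f \<times> nat) set"
  final :: "'q set"
  delta :: "('f \<times> 'q list \<times> 'q) set"   \<comment> \<open>(f, [q1..qn], q) encodes f(q1,...,qn) \<leadsto> q\<close>

definition wf_ta :: "('q, 'f) ta \<Rightarrow> bool" where
  "wf_ta A \<longleftrightarrow> finite (states A) \<and> finite (sig A) \<and> final A \<subseteq> states A \<and>
     (\<forall>(f, qs, q) \<in> delta A. (f, length qs) \<in> sig A \<and> set qs \<subseteq> states A \<and> q \<in> states A)"

text \<open>Terms over \<Sigma> \<union> Q: symbols are Inl f (f \<in> \<Sigma>) or Inr q (a state, used as a constant).\<close>
abbreviation st :: "'q \<Rightarrow> ('f + 'q, 'v) term" where
  "st q \<equiv> Fun (Inr q) []"

definition ta_rules :: "('q, 'f) ta \<Rightarrow> (('f + 'q, 'v) term \<times> ('f + 'q, 'v) term) set" where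
  "ta_rules A = {(Fun (Inl f) (map st qs), st q) | f qs q. (f, qs, q) \<in> delta A}"

definition ta_move :: "('q, 'f) ta \<Rightarrow> (('f + 'q, 'v) term \<times> ('f + 'q, 'v) term) set" where
  "ta_move A = rstep (ta_rules A)"

fun lift :: "('f, 'v) term \<Rightarrow> ('f + 'q, 'v) term" where
  "lift (Var x) = Var x"
| "lift (Fun f ts) = Fun (Inl f) (map lift ts)"

fun inst_states :: "('f, 'v) term \<Rightarrow> ('v \<Rightarrow> 'q) \<Rightarrow> ('f + 'q, 'v) term" where
  "inst_states (Var x) \<alpha> = st (\<alpha> x)"
| "inst_states (Fun f ts) \<alpha> = Fun (Inl f) (map (\<lambda>t. inst_states t \<alpha>) ts)"

definition lang :: "('q, 'f) ta \<Rightarrow> ('f, 'v) term set" where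
  "lang A = {t. ground t \<and> wf_term (sig A) t \<and>
                (\<exists>q \<in> final A. (lift t, st q) \<in> (ta_move A)\<^sup>*)}"

definition weakly_closed :: "('f, 'v) term set \<Rightarrow> (('f, 'v) term \<times> ('f, 'v) term) set \<Rightarrow> bool" where
  "weakly_closed L R \<longleftrightarrow>
     (\<forall>s \<in> L. s \<notin> NF (rstep R) \<longrightarrow> (\<exists>s' \<in> L. (s, s') \<in> (rstep R)\<^sup>+))"

end

theory Submission
  imports Defs
begin

text \<open>Take a non-normal form s accepted in a final state q and a redex in it. A run of A on a
redex l\<sigma> with l linear splits into runs of the substituted subterms \<sigma> x into states \<alpha> x
and a run l\<alpha> \<rightsquigarrow>* q' (linearity makes the choice of \<alpha> consistent). The hypothesis rewrites
l to some t with t\<alpha> \<rightsquigarrow>* q', and since the variables of t occur in l, t\<sigma> still reaches q'.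
The runs above the redex are unchanged, so the reduct of s is again accepted in q, and it is
ground and well-formed because it rewrites from s and has a run.\<close>

lemma subst_apply_compose:
  "subst_apply (subst_apply t \<sigma>) \<tau> = subst_apply t (\<lambda>x. subst_apply (\<sigma> x) \<tau>)"
  by (induction t) auto

lemma vars_term_subst_apply:
  "vars_term (subst_apply t \<sigma>) = (\<Union>x \<in> vars_term t. vars_term (\<sigma> x))"
  by (induction t) auto

lemma rstep_subst: "(s, t) \<in> rstep R \<Longrightarrow> (subst_apply s \<tau>, subst_apply t \<tau>) \<in> rstep R"
proof (induction rule: rstep.induct)
  case (root l r \<sigma>)
  show ?case
    using rstep.root[OF root, of "\<lambda>x. subst_apply (\<sigma> x) \<tau>"] by (simp add: subst_apply_compose)
next
  case (ctxt s t f ss ts)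
  show ?case
    using rstep.ctxt[OF ctxt.IH, of f "map (\<lambda>t. subst_apply t \<tau>) ss" "map (\<lambda>t. subst_apply t \<tau>) ts"]
    by simp
qed

lemma rsteps_subst: "(s, t) \<in> (rstep R)\<^sup>+ \<Longrightarrow> (subst_apply s \<tau>, subst_apply t \<tau>) \<in> (rstep R)\<^sup>+"
  by (induction rule: trancl_induct) (meson rstep_subst r_into_trancl trancl_into_trancl)+

lemma rsteps_ctxt: "(s, t) \<in> (rstep R)\<^sup>+ \<Longrightarrow> (Fun f (ss @ s # ts), Fun f (ss @ t # ts)) \<in> (rstep R)\<^sup>+"
  by (induction rule: trancl_induct) (meson rstep.ctxt r_into_trancl trancl_into_trancl)+

lemma rsteps_star_ctxt: "(s, t) \<in> (rstep R)\<^sup>* \<Longrightarrow> (Fun f (ss @ s # ts), Fun f (ss @ t # ts)) \<in> (rstep R)\<^sup>*"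
  by (induction rule: rtrancl_induct) (meson rstep.ctxt rtrancl.rtrancl_refl rtrancl_into_rtrancl)+

lemma rsteps_star_args:
  "list_all2 (\<lambda>s t. (s, t) \<in> (rstep R)\<^sup>*) ss ts \<Longrightarrow> (Fun f (us @ ss), Fun f (us @ ts)) \<in> (rstep R)\<^sup>*"
proof (induction ss ts arbitrary: us rule: list_all2_induct)
  case (Cons s ss t ts)
  have "(Fun f (us @ s # ss), Fun f (us @ t # ss)) \<in> (rstep R)\<^sup>*"
    using rsteps_star_ctxt[OF Cons.hyps(1)] .
  moreover have "(Fun f (us @ t # ss), Fun f (us @ t # ts)) \<in> (rstep R)\<^sup>*"
    using Cons.IH[of "us @ [t]"] by simp
  ultimately show ?case by (rule rtrancl_trans)
qed simp

lemma rstep_vars_term_subset: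
  assumes "is_trs R" and "(s, t) \<in> rstep R"
  shows "vars_term t \<subseteq> vars_term s"
  using assms(2)
proof (induction rule: rstep.induct)
  case (root l r \<sigma>)
  then have "vars_term r \<subseteq> vars_term l" using assms(1) unfolding is_trs_def by auto
  then show ?case by (auto simp: vars_term_subst_apply)
qed auto

lemma rsteps_vars_term_subset:
  assumes "is_trs R"
  shows "(s, t) \<in> (rstep R)\<^sup>+ \<Longrightarrow> vars_term t \<subseteq> vars_term s"
  by (induction rule: trancl_induct) (use rstep_vars_term_subset[OF assms] in blast)+

abbreviation reaches :: "('q, 'f) ta \<Rightarrow> ('f + 'q, 'v) term \<Rightarrow> 'q \<Rightarrow> bool" where
  "reaches A t q \<equiv> (t, st q) \<in> (ta_move A)\<^sup>*"

lemma ta_move_rule: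
  assumes "(f, qs, q) \<in> delta A"
  shows "(Fun (Inl f) (map st qs), st q) \<in> ta_move A"
proof -
  have "(subst_apply (Fun (Inl f) (map st qs)) Var, subst_apply (st q) Var) \<in> rstep (ta_rules A)"
    by (rule rstep.root) (use assms in \<open>auto simp: ta_rules_def\<close>)
  then show ?thesis by (simp add: ta_move_def o_def)
qed

lemma state_NF_ta_move: "(st q, u) \<notin> ta_move A"
proof
  assume "(st q, u) \<in> ta_move A"
  then show False
    unfolding ta_move_def by (cases rule: rstep.cases) (auto simp: ta_rules_def)
qed

lemma reaches_state_iff: "reaches A (st p) q \<longleftrightarrow> p = q"
  by (auto elim: converse_rtranclE simp: state_NF_ta_move)

lemma reaches_FunD:
  assumes "reaches A u q" and "u = Fun (Inl f) ts"
  shows "\<exists>qs. (f, qs, q) \<in> delta A \<and> list_all2 (reaches A) ts qs"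
  using assms
proof (induction arbitrary: ts rule: converse_rtrancl_induct)
  case (step u v)
  from step.hyps(1) have "(u, v) \<in> rstep (ta_rules A)" by (simp add: ta_move_def)
  then show ?case
  proof (cases rule: rstep.cases)
    case (root l r \<sigma>)
    then obtain g ps p where rule: "l = Fun (Inl g) (map st ps)" "r = st p" "(g, ps, p) \<in> delta A"
      by (auto simp: ta_rules_def)
    with root step.prems have "g = f" "ts = map st ps" by (auto simp: o_def)
    moreover have "p = q" using step.hyps(2) root rule by (simp add: reaches_state_iff)
    moreover have "list_all2 (reaches A) (map st ps) ps"
      by (simp add: list_all2_map1 list_all2_refl)
    ultimately show ?thesis using rule(3) by blast
  next
    case (ctxt s t g ss vs)
    with step.prems have ts: "g = Inl f" "ts = ss @ s # vs" by auto
    with ctxt step.IH obtain qs where qs: "(f, qs, q) \<in> delta A" "list_all2 (reaches A) (ss @ t # vs) qs"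
      by blast
    then obtain ps p ps' where split: "qs = ps @ p # ps'" "list_all2 (reaches A) ss ps"
      "reaches A t p" "list_all2 (reaches A) vs ps'"
      unfolding list_all2_append1 list_all2_Cons1 by blast
    have "reaches A s p"
      using ctxt split(3) by (simp add: ta_move_def converse_rtrancl_into_rtrancl)
    then have "list_all2 (reaches A) (ss @ s # vs) qs"
      using split by (simp add: list_all2_appendI)
    then show ?thesis using qs(1) ts(2) by blast
  qed
qed simp

lemma reaches_Fun_iff:
  "reaches A (Fun (Inl f) ts) q \<longleftrightarrow> (\<exists>qs. (f, qs, q) \<in> delta A \<and> list_all2 (reaches A) ts qs)"
proof
  assume "\<exists>qs. (f, qs, q) \<in> delta A \<and> list_all2 (reaches A) ts qs"
  then obtain qs where qs: "(f, qs, q) \<in> delta A" "list_all2 (reaches A) ts qs" by blast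
  then have "list_all2 (\<lambda>u v. (u, v) \<in> (rstep (ta_rules A))\<^sup>*) ts (map st qs)"
    by (simp add: ta_move_def list_all2_map2)
  then have "(Fun (Inl f) ts, Fun (Inl f) (map st qs)) \<in> (ta_move A)\<^sup>*"
    using rsteps_star_args[where us = "[]"] by (simp add: ta_move_def)
  also have "(Fun (Inl f) (map st qs), st q) \<in> (ta_move A)\<^sup>*"
    using ta_move_rule[OF qs(1)] by blast
  finally show "reaches A (Fun (Inl f) ts) q" .
qed (rule reaches_FunD[OF _ refl])

lemma reaches_lift_wf_term:
  assumes "wf_ta A" and "reaches A (lift u) q"
  shows "wf_term (sig A) u"
  using assms(2)
proof (induction u arbitrary: q)
  case (Fun f us)
  then obtain qs where qs: "(f, qs, q) \<in> delta A" "list_all2 (\<lambda>u. reaches A (lift u)) us qs"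
    by (auto simp: reaches_Fun_iff list_all2_map1)
  then have "(f, length us) \<in> sig A"
    using assms(1) by (auto simp: wf_ta_def list_all2_lengthD)
  moreover have "wf_term (sig A) u" if u: "u \<in> set us" for u
  proof -
    obtain i where "i < length us" "u = us ! i" using u by (auto simp: in_set_conv_nth)
    then show ?thesis using Fun.IH[OF u] qs(2) by (auto dest: list_all2_nthD)
  qed
  ultimately show ?case by simp
qed simp

lemma inst_states_cong: "(\<And>x. x \<in> vars_term t \<Longrightarrow> \<alpha> x = \<beta> x) \<Longrightarrow> inst_states t \<alpha> = inst_states t \<beta>"
  by (induction t) auto

lemma ta_move_lift_subst_inst_states:
  assumes "\<And>x. x \<in> vars_term t \<Longrightarrow> reaches A (lift (\<sigma> x)) (\<alpha> x)"
  shows "(lift (subst_apply t \<sigma>), inst_states t \<alpha>) \<in> (ta_move A)\<^sup>*"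
  using assms
proof (induction t)
  case (Fun f ts)
  have "(lift (subst_apply t \<sigma>), inst_states t \<alpha>) \<in> (ta_move A)\<^sup>*" if "t \<in> set ts" for t
    using Fun.IH[OF that] Fun.prems that by auto
  then have "list_all2 (\<lambda>u v. (u, v) \<in> (rstep (ta_rules A))\<^sup>*)
      (map (\<lambda>t. lift (subst_apply t \<sigma>)) ts) (map (\<lambda>t. inst_states t \<alpha>) ts)"
    by (simp add: list_all2_map1 list_all2_map2 list_all2_same ta_move_def)
  then show ?case
    using rsteps_star_args[where us = "[]"] by (simp add: ta_move_def o_def)
qed simp

lemma merge_on_disjoint_sets:
  assumes disj: "\<And>i j. i < n \<Longrightarrow> j < n \<Longrightarrow> i \<noteq> j \<Longrightarrow> V i \<inter> V j = {}"
    and range: "\<And>i x. i < n \<Longrightarrow> F i x \<in> S" and "d \<in> S"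
  shows "\<exists>\<alpha>. (\<forall>x. \<alpha> x \<in> S) \<and> (\<forall>i < n. \<forall>x \<in> V i. \<alpha> x = F i x)"
proof -
  define \<alpha> where "\<alpha> x = (if \<exists>i < n. x \<in> V i then F (SOME i. i < n \<and> x \<in> V i) x else d)" for x
  have "\<alpha> x = F i x" if "i < n" "x \<in> V i" for i x
  proof -
    have "(SOME i. i < n \<and> x \<in> V i) = i"
      using disj that by (intro some_equality) blast+
    then show ?thesis using that by (auto simp: \<alpha>_def)
  qed
  moreover have "\<alpha> x \<in> S" for x
    using range \<open>d \<in> S\<close> by (auto simp: \<alpha>_def intro: someI2_ex)
  ultimately show ?thesis by blast
qed

lemma reaches_linear_subst_decompose:
  assumes "wf_ta A" and "linear_term l" and "reaches A (lift (subst_apply l \<sigma>)) q" and "q \<in> states A"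
  shows "\<exists>\<alpha>. (\<forall>x. \<alpha> x \<in> states A) \<and> (\<forall>x \<in> vars_term l. reaches A (lift (\<sigma> x)) (\<alpha> x)) \<and>
    reaches A (inst_states l \<alpha>) q"
  using assms(2-)
proof (induction l arbitrary: q)
  case (Var x)
  show ?case by (rule exI[of _ "\<lambda>_. q"]) (use Var in auto)
next
  case (Fun f ls)
  obtain qs where qs: "(f, qs, q) \<in> delta A" "list_all2 (\<lambda>l. reaches A (lift (subst_apply l \<sigma>))) ls qs"
    using Fun.prems(2) by (auto simp: reaches_Fun_iff list_all2_map1)
  have len: "length qs = length ls" and qs_states: "set qs \<subseteq> states A"
    using qs assms(1) by (auto simp: wf_ta_def list_all2_lengthD)
  have "\<exists>\<alpha>. (\<forall>x. \<alpha> x \<in> states A) \<and> (\<forall>x \<in> vars_term (ls ! i). reaches A (lift (\<sigma> x)) (\<alpha> x)) \<and>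
      reaches A (inst_states (ls ! i) \<alpha>) (qs ! i)" if i: "i < length ls" for i
  proof (rule Fun.IH)
    show "ls ! i \<in> set ls" "linear_term (ls ! i)" using Fun.prems(1) i by auto
    show "reaches A (lift (subst_apply (ls ! i) \<sigma>)) (qs ! i)"
      using qs(2) i by (simp add: list_all2_conv_all_nth)
    show "qs ! i \<in> states A" using qs_states len i by auto
  qed
  then obtain F where F: "\<And>i. i < length ls \<Longrightarrow> (\<forall>x. F i x \<in> states A) \<and>
      (\<forall>x \<in> vars_term (ls ! i). reaches A (lift (\<sigma> x)) (F i x)) \<and> reaches A (inst_states (ls ! i) (F i)) (qs ! i)"
    by metis
  have "\<And>i j. i < length ls \<Longrightarrow> j < length ls \<Longrightarrow> i \<noteq> j \<Longrightarrow> vars_term (ls ! i) \<inter> vars_term (ls ! j) = {}"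
    using Fun.prems(1) by simp
  then obtain \<alpha> where \<alpha>: "\<forall>x. \<alpha> x \<in> states A" "\<forall>i < length ls. \<forall>x \<in> vars_term (ls ! i). \<alpha> x = F i x"
    using merge_on_disjoint_sets[of "length ls" "\<lambda>i. vars_term (ls ! i)" F "states A" q] F Fun.prems(3)
    by blast
  have "\<forall>x \<in> vars_term (Fun f ls). reaches A (lift (\<sigma> x)) (\<alpha> x)"
    using F \<alpha>(2) by (fastforce simp: in_set_conv_nth)
  moreover have "reaches A (inst_states (Fun f ls) \<alpha>) q"
  proof -
    have "inst_states (ls ! i) \<alpha> = inst_states (ls ! i) (F i)" if "i < length ls" for i
      using \<alpha>(2) that by (auto intro: inst_states_cong)
    then have "list_all2 (\<lambda>l. reaches A (inst_states l \<alpha>)) ls qs"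
      using F len by (auto simp: list_all2_conv_all_nth)
    then show ?thesis using qs(1) by (auto simp: reaches_Fun_iff list_all2_map1)
  qed
  ultimately show ?case using \<alpha>(1) by blast
qed

definition rule_runs_rewritable :: "('q, 'f) ta \<Rightarrow> (('f, 'v) term \<times> ('f, 'v) term) set \<Rightarrow> bool" where
  "rule_runs_rewritable A R \<longleftrightarrow>
     (\<forall>(l, r) \<in> R. \<forall>\<alpha> q. (\<forall>x. \<alpha> x \<in> states A) \<longrightarrow> q \<in> states A \<longrightarrow> reaches A (inst_states l \<alpha>) q \<longrightarrow>
        (\<exists>t. (l, t) \<in> (rstep R)\<^sup>+ \<and> reaches A (inst_states t \<alpha>) q))"

lemma rule_runs_rewritableD:
  assumes "rule_runs_rewritable A R" and "(l, r) \<in> R"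
    and "\<forall>x. \<alpha> x \<in> states A" and "q \<in> states A" and "reaches A (inst_states l \<alpha>) q"
  shows "\<exists>t. (l, t) \<in> (rstep R)\<^sup>+ \<and> reaches A (inst_states t \<alpha>) q"
  using assms unfolding rule_runs_rewritable_def by blast

lemma rstep_reaches_imp_rsteps_reaches:
  assumes "wf_ta A" and "is_trs R" and "left_linear R" and "rule_runs_rewritable A R"
    and "(s, t) \<in> rstep R" and "reaches A (lift s :: ('f + 'q, 'v) term) q" and "q \<in> states A"
  shows "\<exists>s'. (s, s') \<in> (rstep R)\<^sup>+ \<and> reaches A (lift s' :: ('f + 'q, 'v) term) q"
  using assms(5-)
proof (induction arbitrary: q rule: rstep.induct)
  case (root l r \<sigma>)
  have "linear_term l" using assms(3) root.hyps unfolding left_linear_def by auto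
  then obtain \<alpha> where \<alpha>: "\<forall>x. \<alpha> x \<in> states A" "\<forall>x \<in> vars_term l. reaches A (lift (\<sigma> x)) (\<alpha> x)"
      "reaches A (inst_states l \<alpha>) q"
    using reaches_linear_subst_decompose[OF assms(1) _ root.prems] by blast
  then obtain t where t: "(l, t) \<in> (rstep R)\<^sup>+" "reaches A (inst_states t \<alpha>) q"
    using rule_runs_rewritableD[OF assms(4) root.hyps _ root.prems(2)] by blast
  have "vars_term t \<subseteq> vars_term l" using rsteps_vars_term_subset[OF assms(2) t(1)] .
  then have "(lift (subst_apply t \<sigma>) :: ('f + 'q, 'v) term, inst_states t \<alpha>) \<in> (ta_move A)\<^sup>*"
    using \<alpha>(2) by (intro ta_move_lift_subst_inst_states) blast
  then have "reaches A (lift (subst_apply t \<sigma>) :: ('f + 'q, 'v) term) q"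
    using t(2) by (rule rtrancl_trans)
  then show ?case using rsteps_subst[OF t(1)] by blast
next
  case (ctxt u u' f ss ts)
  obtain qs where qs: "(f, qs, q) \<in> delta A"
      "list_all2 (\<lambda>u. reaches A (lift u :: ('f + 'q, 'v) term)) (ss @ u # ts) qs"
    using ctxt.prems(1) unfolding lift.simps reaches_Fun_iff list_all2_map1 by blast
  then obtain ps p ps' where split: "qs = ps @ p # ps'"
      "list_all2 (\<lambda>u. reaches A (lift u :: ('f + 'q, 'v) term)) ss ps"
      "reaches A (lift u :: ('f + 'q, 'v) term) p"
      "list_all2 (\<lambda>u. reaches A (lift u :: ('f + 'q, 'v) term)) ts ps'"
    unfolding list_all2_append1 list_all2_Cons1 by blast
  have "p \<in> states A" using assms(1) qs(1) split(1) by (auto simp: wf_ta_def)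
  then obtain u'' where u'': "(u, u'') \<in> (rstep R)\<^sup>+" "reaches A (lift u'' :: ('f + 'q, 'v) term) p"
    using ctxt.IH split(3) by blast
  have "list_all2 (\<lambda>u. reaches A (lift u :: ('f + 'q, 'v) term)) (ss @ u'' # ts) qs"
    using split u''(2) by (simp add: list_all2_appendI)
  then have "reaches A (lift (Fun f (ss @ u'' # ts)) :: ('f + 'q, 'v) term) q"
    using qs(1) unfolding lift.simps reaches_Fun_iff list_all2_map1 by blast
  then show ?case using rsteps_ctxt[OF u''(1)] by blast
qed

theorem mainTheorem3:
  fixes A :: "('q, 'f) ta" and R :: "(('f, 'v) term \<times> ('f, 'v) term) set"
  assumes "wf_ta A"
    and "is_trs R" and "trs_over (sig A) R" and "left_linear R"
    and "\<And>l r (\<alpha> :: 'v \<Rightarrow> 'q) q. (l, r) \<in> R \<Longrightarrow> (\<forall>x. \<alpha> x \<in> states A) \<Longrightarrow> q \<in> states A \<Longrightarrow>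
           (inst_states l \<alpha>, st q) \<in> (ta_move A)\<^sup>* \<Longrightarrow>
           \<exists>t. (l, t) \<in> (rstep R)\<^sup>+ \<and> (inst_states t \<alpha>, st q) \<in> (ta_move A)\<^sup>*"
  shows "weakly_closed (lang A :: ('f, 'v) term set) R"
  unfolding weakly_closed_def
proof (intro ballI impI)
  fix s :: "('f, 'v) term"
  assume s: "s \<in> lang A" and "s \<notin> NF (rstep R)"
  then obtain t where step: "(s, t) \<in> rstep R" by (auto simp: NF_def)
  obtain q where q: "q \<in> final A" "reaches A (lift s :: ('f + 'q, 'v) term) q" "ground s"
    using s by (auto simp: lang_def)
  have "q \<in> states A" using assms(1) q(1) by (auto simp: wf_ta_def)
  moreover have "rule_runs_rewritable A R"
    unfolding rule_runs_rewritable_def by (auto intro: assms(5))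
  ultimately obtain s' where s': "(s, s') \<in> (rstep R)\<^sup>+" "reaches A (lift s' :: ('f + 'q, 'v) term) q"
    using rstep_reaches_imp_rsteps_reaches[OF assms(1,2,4) _ step q(2)] by blast
  \<comment> \<open>well-formedness of s' follows from its run\<close>
  have "ground s'" using rsteps_vars_term_subset[OF assms(2) s'(1)] q(3) by (auto simp: ground_def)
  with s' q(1) reaches_lift_wf_term[OF assms(1) s'(2)] have "s' \<in> lang A"
    by (auto simp: lang_def)
  with s'(1) show "\<exists>s' \<in> lang A. (s, s') \<in> (rstep R)\<^sup>+" by blast
qed

end
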